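(* Let $\Phi$ be a law and $\Theta$ an action theory. If $\Theta$ is modular, then every $\Theta'\in\Theta\ominus\Phi$ is modular.
   Context: Fix a finite set $\mathrm{Act}$ of atomic actions and a finite set $\mathrm{Prop}$ of atoms; $\mathrm{Lit}$ is the set of literals. Boolean formulas are classical propositional formulas over $\mathrm{Prop}$, $\models_{CPL}$ classical consequence. Modal formulas are built from Boolean formulas with the Boolean connectives and $[a]$ ($a\in\mathrm{Act}$); $\langle a\rangle\Phi:=\neg[a]\neg\Phi$. A PDL-model is $\langle W,R\rangle$, $W$ a set of valuations (maximal consistent sets of literals), $R_a\subseteq W\times W$ for each $a$; truth is standard; a model satisfies a formula iff it holds at all worlds; $\Sigma\models_{PDL}\Phi$ iff every model of $\Sigma$ is a model of $\Phi$. A static law is a Boolean formula; an effect law for $a$ is $\varphi\to[a]\psi$; an executability law for $a$ is $\varphi\to\langle a\rangle\top$ ($\varphi,\psi$ Boolean); a law is any of these. An action theory is a finite set $\Theta=S\cup E\cup X$ of static, effect and executability laws; $E_a,X_a$ are those about $a$. $\Theta$ is modular iff for every Boolean $\varphi$, $\Theta\models_{PDL}\varphi$ implies $S\models_{CPL}\varphi$ (with $S$ the static laws of $\Theta$). Syntactic contraction $\Theta\ominus\Phi$ (a set of action theories). Notation: $\bigwedge S$ is the conjunction of $S$; $IP(\chi)$ is the set of prime implicants of $\chi$; for a term $\tau$, $\mathrm{atm}(\tau)$ is its set of atoms, and for $A\subseteq\mathrm{Prop}\setminus\mathrm{atm}(\tau)$, $\varphi_A:=\bigwedge_{p\in A}p\wedge\bigwedge_{p\in\mathrm{Prop}\setminus(\mathrm{atm}(\tau)\cup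 A)}\neg p$. (1) Executability law $\varphi\to\langle a\rangle\top$: if $\Theta\not\models_{PDL}\varphi\to\langle a\rangle\top$ the result is $\{\Theta\}$; otherwise it consists of the theories $(\Theta\setminus X_a)\cup\{(\varphi_i\wedge\neg(\tau\wedge\varphi_A))\to\langle a\rangle\top:\varphi_i\to\langle a\rangle\top\in X_a\}$ for all $\tau\in IP(\bigwedge S\wedge\varphi)$ and $A\subseteq\mathrm{Prop}\setminus\mathrm{atm}(\tau)$ with $S\not\models_{CPL}\neg(\tau\wedge\varphi_A)$. (2) Effect law $\varphi\to[a]\psi$: if $\Theta\not\models_{PDL}\varphi\to[a]\psi$ the result is $\{\Theta\}$; otherwise let $E^-_a$ be the union of all minimal $E'\subseteq E_a$ with $S\cup E'\models_{PDL}\varphi\to[a]\psi$. For every $\tau\in IP(\bigwedge S\wedge\varphi)$, $A\subseteq\mathrm{Prop}\setminus\mathrm{atm}(\tau)$ with $S\not\models_{CPL}\neg(\tau\wedge\varphi_A)$, and $\tau'\in IP(\bigwedge S\wedge\neg\psi)$, the result contains $(\Theta\setminus E^-_a)\cup\{(\varphi_i\wedge\neg(\tau\wedge\varphi_A))\to[a]\psi_i:\varphi_i\to[a]\psi_i\in E^-_a\}\cup\{(\varphi_i\wedge\tau\wedge\varphi_A)\to[a](\psi_i\vee\tau'):\varphi_i\to[a]\psi_i\in E^-_a\}\cup\{(\tau\wedge\varphi_A\wedge\ell)\to[a](\psi\vee\ell):\ell\in L$ for some $L\subseteq\mathrm{Lit}$ with $S\models_{CPL}(\tau\wedge\varphi_A)\to\bigwedge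 L$, $S\not\models_{CPL}\neg(\tau'\wedge\bigwedge L)$, and ($\Theta\not\models_{PDL}(\tau\wedge\varphi_A\wedge\ell)\to[a]\neg\ell$ or $\ell$ is a literal of $\tau'$)$\}$. (3) Static law $\varphi$: if $S\not\models_{CPL}\varphi$ the result is $\{\Theta\}$; otherwise, for every $S^-\in S\ominus\varphi$ (a given classical contraction operator, assumed to behave like a Katsuno–Mendelzon contraction, in particular $S\models_{CPL}\bigwedge S^-$, and to be sound, complete and minimal w.r.t. its semantics), the result contains the theory obtained from $(\Theta\setminus S)\cup S^-$ by replacing, for each action $a$, $X_a$ by $\{(\varphi_i\wedge\varphi)\to\langle a\rangle\top:\varphi_i\to\langle a\rangle\top\in X_a\}$ and adding $\neg\varphi\to[a]\bot$; its set of static laws is $S^-$. *)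

theory Defs
  imports Main
begin

text \<open>Atoms have a finite type 'p (Prop), actions a finite type 'a (Act).
  Boolean formulas are the box-free modal formulas.\<close>

datatype ('p, 'a) fm =
    Atom 'p
  | FBot
  | FTop
  | Neg "('p, 'a) fm"
  | And "('p, 'a) fm" "('p, 'a) fm"
  | Or "('p, 'a) fm" "('p, 'a) fm"
  | Imp "('p, 'a) fm" "('p, 'a) fm"
  | Box 'a "('p, 'a) fm"

definition Dia :: "'a \<Rightarrow> ('p, 'a) fm \<Rightarrow> ('p, 'a) fm" where
  "Dia a f = Neg (Box a (Neg f))"

fun is_bool :: "('p, 'a) fm \<Rightarrow> bool" where
  "is_bool (Atom p) = True"
| "is_bool FBot = True"
| "is_bool FTop = True"
| "is_bool (Neg f) = is_bool f"
| "is_bool (And f g) = (is_bool f \<and> is_bool g)"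
| "is_bool (Or f g) = (is_bool f \<and> is_bool g)"
| "is_bool (Imp f g) = (is_bool f \<and> is_bool g)"
| "is_bool (Box a f) = False"

definition Conj :: "('p, 'a) fm set \<Rightarrow> ('p, 'a) fm" where
  "Conj S = foldr And (SOME xs. set xs = S) FTop"

text \<open>Worlds are valuations ('p => bool), i.e. maximal consistent sets of literals.\<close>
type_synonym 'p val = "'p \<Rightarrow> bool"

fun sat :: "('a \<Rightarrow> ('p val \<times> 'p val) set) \<Rightarrow> 'p val \<Rightarrow> ('p, 'a) fm \<Rightarrow> bool" where
  "sat R w (Atom p) = w p"
| "sat R w FBot = False"
| "sat R w FTop = True"
| "sat R w (Neg f) = (\<not> sat R w f)"
| "sat R w (And f g) = (sat R w f \<and> sat R w g)"
| "sat R w (Or f g) = (sat R w f \<or> sat R w g)"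
| "sat R w (Imp f g) = (sat R w f \<longrightarrow> sat R w g)"
| "sat R w (Box a f) = (\<forall>v. (w, v) \<in> R a \<longrightarrow> sat R v f)"

definition is_model :: "'p val set \<Rightarrow> ('a \<Rightarrow> ('p val \<times> 'p val) set) \<Rightarrow> bool" where
  "is_model W R = (\<forall>a. R a \<subseteq> W \<times> W)"

definition valid_in :: "'p val set \<Rightarrow> ('a \<Rightarrow> ('p val \<times> 'p val) set) \<Rightarrow> ('p, 'a) fm \<Rightarrow> bool" where
  "valid_in W R f = (\<forall>w\<in>W. sat R w f)"

definition pdl_entails :: "('p, 'a) fm set \<Rightarrow> ('p, 'a) fm \<Rightarrow> bool" where
  "pdl_entails \<Sigma> f = (\<forall>W R. is_model W R \<longrightarrow> (\<forall>s\<in>\<Sigma>. valid_in W R s) \<longrightarrow> valid_in W R f)"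

definition bsat :: "'p val \<Rightarrow> ('p, 'a) fm \<Rightarrow> bool" where
  "bsat v f = sat (\<lambda>_. {}) v f"

definition cpl_entails :: "('p, 'a) fm set \<Rightarrow> ('p, 'a) fm \<Rightarrow> bool" where
  "cpl_entails S f = (\<forall>v. (\<forall>s\<in>S. bsat v s) \<longrightarrow> bsat v f)"

definition vals :: "('p, 'a) fm set \<Rightarrow> 'p val set" where
  "vals S = {v. \<forall>s\<in>S. bsat v s}"

datatype ('p, 'a) law =
    Stat "('p, 'a) fm"
  | Eff "('p, 'a) fm" 'a "('p, 'a) fm"
  | Exe "('p, 'a) fm" 'a

fun law_fm :: "('p, 'a) law \<Rightarrow> ('p, 'a) fm" where
  "law_fm (Stat f) = f"
| "law_fm (Eff f a g) = Imp f (Box a g)"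
| "law_fm (Exe f a) = Imp f (Dia a FTop)"

fun wf_law :: "('p, 'a) law \<Rightarrow> bool" where
  "wf_law (Stat f) = is_bool f"
| "wf_law (Eff f a g) = (is_bool f \<and> is_bool g)"
| "wf_law (Exe f a) = is_bool f"

definition action_theory :: "('p, 'a) law set \<Rightarrow> bool" where
  "action_theory \<Theta> = (finite \<Theta> \<and> (\<forall>l\<in>\<Theta>. wf_law l))"

definition statics :: "('p, 'a) law set \<Rightarrow> ('p, 'a) fm set" where
  "statics \<Theta> = {f. Stat f \<in> \<Theta>}"

definition effs :: "('p, 'a) law set \<Rightarrow> 'a \<Rightarrow> ('p, 'a) law set" where
  "effs \<Theta> a = {l\<in>\<Theta>. \<exists>f g. l = Eff f a g}"

definition exes :: "('p, 'a) law set \<Rightarrow> 'a \<Rightarrow> ('p, 'a) law set" where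
  "exes \<Theta> a = {l\<in>\<Theta>. \<exists>f. l = Exe f a}"

definition th_entails :: "('p, 'a) law set \<Rightarrow> ('p, 'a) fm \<Rightarrow> bool" where
  "th_entails \<Theta> f = pdl_entails (law_fm ` \<Theta>) f"

definition modular :: "('p, 'a) law set \<Rightarrow> bool" where
  "modular \<Theta> = (\<forall>f. is_bool f \<longrightarrow> th_entails \<Theta> f \<longrightarrow> cpl_entails (statics \<Theta>) f)"

type_synonym 'p lit = "'p \<times> bool"

fun lit_fm :: "'p lit \<Rightarrow> ('p, 'a) fm" where
  "lit_fm (p, b) = (if b then Atom p else Neg (Atom p))"

definition term_fm :: "'p lit set \<Rightarrow> ('p, 'a) fm" where
  "term_fm T = Conj (lit_fm ` T)"

definition consistent_term :: "'p lit set \<Rightarrow> bool" where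
  "consistent_term T = (\<forall>p. \<not> ((p, True) \<in> T \<and> (p, False) \<in> T))"

definition term_implies :: "'p lit set \<Rightarrow> ('p, 'a) fm \<Rightarrow> bool" where
  "term_implies T f = (\<forall>v. (\<forall>l\<in>T. bsat v (lit_fm l :: ('p, 'a) fm)) \<longrightarrow> bsat v f)"

definition IP :: "('p, 'a) fm \<Rightarrow> 'p lit set set" where
  "IP f = {T. consistent_term T \<and> term_implies T f \<and> (\<forall>T'. T' \<subset> T \<longrightarrow> \<not> term_implies T' f)}"

definition atm :: "'p lit set \<Rightarrow> 'p set" where
  "atm T = fst ` T"

definition phiA :: "'p lit set \<Rightarrow> 'p set \<Rightarrow> 'p lit set" where
  "phiA T A = (\<lambda>p. (p, True)) ` A \<union> (\<lambda>p. (p, False)) ` (UNIV - (atm T \<union> A))"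

definition tphi :: "'p lit set \<Rightarrow> 'p set \<Rightarrow> ('p, 'a) fm" where
  "tphi T A = And (term_fm T) (Conj (lit_fm ` phiA T A))"

definition contract_exe :: "('p, 'a) law set \<Rightarrow> ('p, 'a) fm \<Rightarrow> 'a \<Rightarrow> ('p, 'a) law set set" where
  "contract_exe \<Theta> f a =
    (if \<not> th_entails \<Theta> (law_fm (Exe f a)) then {\<Theta>}
     else {(\<Theta> - exes \<Theta> a) \<union> {Exe (And fi (Neg (tphi T A))) a | fi. Exe fi a \<in> \<Theta>} | T A.
             T \<in> IP (And (Conj (statics \<Theta>)) f) \<and> A \<subseteq> UNIV - atm T \<and>
             \<not> cpl_entails (statics \<Theta>) (Neg (tphi T A))})"

definition eff_suffices :: "('p, 'a) law set \<Rightarrow> ('p, 'a) law set \<Rightarrow> ('p, 'a) fm \<Rightarrow> 'a \<Rightarrow> ('p, 'a) fm \<Rightarrow> bool" where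
  "eff_suffices \<Theta> E' f a g = pdl_entails (statics \<Theta> \<union> law_fm ` E') (law_fm (Eff f a g))"

definition eff_minus :: "('p, 'a) law set \<Rightarrow> ('p, 'a) fm \<Rightarrow> 'a \<Rightarrow> ('p, 'a) fm \<Rightarrow> ('p, 'a) law set" where
  "eff_minus \<Theta> f a g = \<Union> {E'. E' \<subseteq> effs \<Theta> a \<and> eff_suffices \<Theta> E' f a g \<and>
                                (\<forall>E''. E'' \<subset> E' \<longrightarrow> \<not> eff_suffices \<Theta> E'' f a g)}"

definition eff_result :: "('p, 'a) law set \<Rightarrow> ('p, 'a) fm \<Rightarrow> 'a \<Rightarrow> ('p, 'a) fm \<Rightarrow>
    'p lit set \<Rightarrow> 'p set \<Rightarrow> 'p lit set \<Rightarrow> 'p lit set \<Rightarrow> ('p, 'a) law set" where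
  "eff_result \<Theta> f a g T A T' L =
    (let Em = eff_minus \<Theta> f a g; t = tphi T A in
      (\<Theta> - Em)
      \<union> {Eff (And fi (Neg t)) a gi | fi gi. Eff fi a gi \<in> Em}
      \<union> {Eff (And fi t) a (Or gi (term_fm T')) | fi gi. Eff fi a gi \<in> Em}
      \<union> {Eff (And t (lit_fm l)) a (Or g (lit_fm l)) | l. l \<in> L \<and>
            (\<not> th_entails \<Theta> (law_fm (Eff (And t (lit_fm l)) a (Neg (lit_fm l)))) \<or> l \<in> T')})"

definition contract_eff :: "('p, 'a) law set \<Rightarrow> ('p, 'a) fm \<Rightarrow> 'a \<Rightarrow> ('p, 'a) fm \<Rightarrow> ('p, 'a) law set set" where
  "contract_eff \<Theta> f a g =
    (if \<not> th_entails \<Theta> (law_fm (Eff f a g)) then {\<Theta>}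
     else {eff_result \<Theta> f a g T A T' L | T A T' L.
             T \<in> IP (And (Conj (statics \<Theta>)) f) \<and> A \<subseteq> UNIV - atm T \<and>
             \<not> cpl_entails (statics \<Theta>) (Neg (tphi T A)) \<and>
             T' \<in> IP (And (Conj (statics \<Theta>)) (Neg g)) \<and>
             cpl_entails (statics \<Theta>) (Imp (tphi T A) (Conj (lit_fm ` L))) \<and>
             \<not> cpl_entails (statics \<Theta>) (Neg (And (term_fm T') (Conj (lit_fm ` L))))})"

text \<open>Assumptions on the classical contraction operator for static laws:
  Katsuno--Mendelzon style, sound, complete and minimal w.r.t. the semantics
  "add exactly one valuation falsifying phi".\<close>
definition good_scontr :: "(('p, 'a) fm set \<Rightarrow> ('p, 'a) fm \<Rightarrow> ('p, 'a) fm set set) \<Rightarrow> bool" where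
  "good_scontr sc =
    (\<forall>S f. finite S \<and> (\<forall>s\<in>S. is_bool s) \<and> is_bool f \<and> cpl_entails S f \<longrightarrow>
       (\<forall>S'\<in>sc S f. finite S' \<and> (\<forall>s\<in>S'. is_bool s) \<and>
            (\<exists>w. \<not> bsat w f \<and> vals S' = vals S \<union> {w})) \<and>
       (\<forall>w. \<not> bsat w f \<longrightarrow> (\<exists>S'\<in>sc S f. vals S' = vals S \<union> {w})))"

definition contract_stat :: "(('p, 'a) fm set \<Rightarrow> ('p, 'a) fm \<Rightarrow> ('p, 'a) fm set set) \<Rightarrow>
    ('p, 'a) law set \<Rightarrow> ('p, 'a) fm \<Rightarrow> ('p, 'a) law set set" where
  "contract_stat sc \<Theta> f =
    (if \<not> cpl_entails (statics \<Theta>) f then {\<Theta>}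
     else {{l\<in>\<Theta>. (\<exists>g a h. l = Eff g a h)}
           \<union> Stat ` S'
           \<union> {Exe (And fi f) a | fi a. Exe fi a \<in> \<Theta>}
           \<union> range (\<lambda>a. Eff (Neg f) a FBot) | S'. S' \<in> sc (statics \<Theta>) f})"

definition contract :: "(('p, 'a) fm set \<Rightarrow> ('p, 'a) fm \<Rightarrow> ('p, 'a) fm set set) \<Rightarrow>
    ('p, 'a) law set \<Rightarrow> ('p, 'a) law \<Rightarrow> ('p, 'a) law set set" where
  "contract sc \<Theta> \<Phi> = (case \<Phi> of
       Stat f \<Rightarrow> contract_stat sc \<Theta> f
     | Eff f a g \<Rightarrow> contract_eff \<Theta> f a g
     | Exe f a \<Rightarrow> contract_exe \<Theta> f a)"

end

theory Submission
  imports Defs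
begin

text \<open>A theory is modular exactly when every valuation satisfying its static laws is a world of
  some model: a valuation lying in no model is excluded by the (Boolean, entailed) negation of its
  characteristic formula. Contracting an executability or effect law keeps the static laws and
  only adds laws entailed by the old theory; the new laws (\<tau> \<and> \<phi>_A \<and> \<ell>) \<rightarrow> [a](\<psi> \<or> \<ell>)
  are entailed because \<tau> \<and> \<phi>_A implies \<phi>. Contracting a static law \<phi> adds one valuation w
  falsifying \<phi>; adding w without transitions to a model of the old theory, or to the empty model,
  gives a model of the new one.\<close>

lemma sat_bool_indep: "is_bool f \<Longrightarrow> sat R w f = sat R' w f"
  by (induction f) auto

lemma bsat_eq_sat: "is_bool f \<Longrightarrow> bsat w f = sat R w f"
  unfolding bsat_def using sat_bool_indep by blast

lemma Conj_eq_foldr: "finite S \<Longrightarrow> \<exists>xs. set xs = S \<and> Conj S = foldr And xs FTop"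
  unfolding Conj_def using someI_ex[OF finite_list] by blast

lemma sat_foldr_And: "sat R w (foldr And xs FTop) = (\<forall>s\<in>set xs. sat R w s)"
  by (induction xs) auto

lemma is_bool_foldr_And: "\<forall>s\<in>set xs. is_bool s \<Longrightarrow> is_bool (foldr And xs FTop)"
  by (induction xs) auto

lemma sat_Conj:
  assumes "finite S"
  shows "sat R w (Conj S) = (\<forall>s\<in>S. sat R w s)"
proof -
  obtain xs where "set xs = S" "Conj S = foldr And xs FTop" using Conj_eq_foldr[OF assms] by blast
  then show ?thesis by (simp add: sat_foldr_And)
qed

lemma is_bool_Conj:
  assumes "finite S" "\<forall>s\<in>S. is_bool s"
  shows "is_bool (Conj S)"
proof -
  obtain xs where "set xs = S" "Conj S = foldr And xs FTop" using Conj_eq_foldr[OF assms(1)] by blast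
  then show ?thesis using assms(2) by (simp add: is_bool_foldr_And)
qed

lemma is_bool_lit_fm: "is_bool (lit_fm l)"
  by (cases l) auto

definition val_fm :: "('p::finite) val \<Rightarrow> ('p, 'a) fm" where
  "val_fm v = Conj (lit_fm ` {(p, v p) | p. True})"

lemma is_bool_val_fm: "is_bool (val_fm v)"
  unfolding val_fm_def by (rule is_bool_Conj) (auto simp: is_bool_lit_fm)

lemma sat_val_fm: "sat R u (val_fm v :: ('p::finite, 'a) fm) \<longleftrightarrow> u = v"
proof -
  have "sat R u (val_fm v :: ('p, 'a) fm) = (\<forall>p. sat R u (lit_fm (p, v p) :: ('p, 'a) fm))"
    unfolding val_fm_def by (subst sat_Conj) auto
  also have "\<dots> = (\<forall>p. u p = v p)" by auto
  finally show ?thesis by auto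
qed

lemma sat_tphi_imp:
  assumes "sat R w (tphi T A :: ('p::finite, 'a) fm)" "T \<in> IP (And C f)" "is_bool f"
  shows "sat R w f"
proof -
  have "sat R w (term_fm T :: ('p, 'a) fm)" using assms(1) unfolding tphi_def by simp
  then have "\<forall>l\<in>T. bsat w (lit_fm l :: ('p, 'a) fm)"
    unfolding term_fm_def by (simp add: sat_Conj bsat_eq_sat[OF is_bool_lit_fm, of _ _ R])
  then have "bsat w (And C f)" using assms(2) unfolding IP_def term_implies_def by blast
  then show ?thesis using assms(3) bsat_eq_sat by (metis bsat_def sat.simps(5))
qed

definition th_model :: "('p, 'a) law set \<Rightarrow> 'p val set \<Rightarrow> ('a \<Rightarrow> ('p val \<times> 'p val) set) \<Rightarrow> bool" where
  "th_model \<Theta> W R \<longleftrightarrow> is_model W R \<and> (\<forall>l\<in>\<Theta>. valid_in W R (law_fm l))"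

lemma th_entails_iff_models: "th_entails \<Theta> f \<longleftrightarrow> (\<forall>W R. th_model \<Theta> W R \<longrightarrow> valid_in W R f)"
  unfolding th_entails_def pdl_entails_def th_model_def by auto

lemma th_model_worlds_vals:
  assumes "th_model \<Theta> W R" "\<forall>l\<in>\<Theta>. wf_law l"
  shows "W \<subseteq> vals (statics \<Theta>)"
proof
  fix x assume "x \<in> W"
  have "bsat x s" if "Stat s \<in> \<Theta>" for s
    using assms that \<open>x \<in> W\<close> bsat_eq_sat[of s x R] unfolding th_model_def valid_in_def by force
  then show "x \<in> vals (statics \<Theta>)" unfolding vals_def statics_def by blast
qed

lemma modular_iff_models_cover:
  fixes \<Theta> :: "('p::finite, 'a) law set"
  shows "modular \<Theta> \<longleftrightarrow> (\<forall>v\<in>vals (statics \<Theta>). \<exists>W R. th_model \<Theta> W R \<and> v \<in> W)"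
proof
  assume modular: "modular \<Theta>"
  show "\<forall>v\<in>vals (statics \<Theta>). \<exists>W R. th_model \<Theta> W R \<and> v \<in> W"
  proof (rule ccontr)
    assume "\<not> ?thesis"
    then obtain v where v: "v \<in> vals (statics \<Theta>)" and "\<forall>W R. th_model \<Theta> W R \<longrightarrow> v \<notin> W"
      by blast
    then have "th_entails \<Theta> (Neg (val_fm v))"
      unfolding th_entails_iff_models valid_in_def by (auto simp: sat_val_fm)
    then have "cpl_entails (statics \<Theta>) (Neg (val_fm v))"
      using modular is_bool_val_fm unfolding modular_def by (metis is_bool.simps(4))
    then show False
      using v unfolding cpl_entails_def vals_def bsat_def by (auto simp: sat_val_fm)
  qed
next
  assume cover: "\<forall>v\<in>vals (statics \<Theta>). \<exists>W R. th_model \<Theta> W R \<and> v \<in> W"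
  show "modular \<Theta>"
    unfolding modular_def cpl_entails_def
  proof (intro allI impI)
    fix f v
    assume "is_bool f" "th_entails \<Theta> f" "\<forall>s\<in>statics \<Theta>. bsat v s"
    moreover obtain W R where "th_model \<Theta> W R" "v \<in> W"
      using cover \<open>\<forall>s\<in>statics \<Theta>. bsat v s\<close> unfolding vals_def by blast
    ultimately show "bsat v f" using bsat_eq_sat[of f v R] by (auto simp: th_entails_iff_models valid_in_def)
  qed
qed

lemma modular_if_laws_entailed:
  fixes \<Theta> :: "('p::finite, 'a) law set"
  assumes "modular \<Theta>" "statics \<Theta>' = statics \<Theta>" "\<forall>l\<in>\<Theta>'. th_entails \<Theta> (law_fm l)"
  shows "modular \<Theta>'"
proof -
  have "th_model \<Theta>' W R" if "th_model \<Theta> W R" for W R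
    using that assms(3) unfolding th_model_def th_entails_iff_models by blast
  then show ?thesis using assms(1,2) unfolding modular_iff_models_cover by metis
qed

lemma modular_contract_exe:
  fixes \<Theta> :: "('p::finite, 'a) law set"
  assumes "modular \<Theta>" "\<Theta>' \<in> contract_exe \<Theta> f a"
  shows "modular \<Theta>'"
proof (cases "th_entails \<Theta> (law_fm (Exe f a))")
  case False
  with assms show ?thesis by (simp add: contract_exe_def)
next
  case True
  then obtain T A where \<Theta>': "\<Theta>' = (\<Theta> - exes \<Theta> a)
      \<union> {Exe (And fi (Neg (tphi T A))) a | fi. Exe fi a \<in> \<Theta>}"
    using assms(2) unfolding contract_exe_def by auto
  show ?thesis
  proof (rule modular_if_laws_entailed[OF assms(1)])
    show "statics \<Theta>' = statics \<Theta>" unfolding \<Theta>' statics_def exes_def by auto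
    show "\<forall>l\<in>\<Theta>'. th_entails \<Theta> (law_fm l)"
      unfolding \<Theta>' th_entails_iff_models th_model_def valid_in_def by fastforce
  qed
qed

lemma modular_contract_eff:
  fixes \<Theta> :: "('p::finite, 'a) law set"
  assumes "modular \<Theta>" "is_bool f" "\<Theta>' \<in> contract_eff \<Theta> f a g"
  shows "modular \<Theta>'"
proof (cases "th_entails \<Theta> (law_fm (Eff f a g))")
  case False
  with assms show ?thesis by (simp add: contract_eff_def)
next
  case True
  then obtain T A T' L where \<Theta>': "\<Theta>' = eff_result \<Theta> f a g T A T' L"
    and T: "T \<in> IP (And (Conj (statics \<Theta>)) f)"
    using assms(3) unfolding contract_eff_def by auto
  define Em where "Em = eff_minus \<Theta> f a g"
  define t :: "('p, 'a) fm" where "t = tphi T A"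
  have Em: "Em \<subseteq> effs \<Theta> a" unfolding Em_def eff_minus_def by blast
  have \<Theta>'_eq: "\<Theta>' = (\<Theta> - Em)
      \<union> {Eff (And fi (Neg t)) a gi | fi gi. Eff fi a gi \<in> Em}
      \<union> {Eff (And fi t) a (Or gi (term_fm T')) | fi gi. Eff fi a gi \<in> Em}
      \<union> {Eff (And t (lit_fm l)) a (Or g (lit_fm l)) | l. l \<in> L \<and>
            (\<not> th_entails \<Theta> (law_fm (Eff (And t (lit_fm l)) a (Neg (lit_fm l)))) \<or> l \<in> T')}"
    unfolding \<Theta>' eff_result_def Em_def t_def Let_def by simp
  show ?thesis
  proof (rule modular_if_laws_entailed[OF assms(1)])
    show "statics \<Theta>' = statics \<Theta>"
      unfolding \<Theta>'_eq statics_def using Em unfolding effs_def by auto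
    show "\<forall>l\<in>\<Theta>'. th_entails \<Theta> (law_fm l)"
      unfolding th_entails_iff_models
    proof (intro ballI allI impI)
      fix l W R
      assume l: "l \<in> \<Theta>'" and model: "th_model \<Theta> W R"
      have valid: "valid_in W R (law_fm l)" if "l \<in> \<Theta>" for l
        using model that unfolding th_model_def by blast
      have valid_Em: "valid_in W R (law_fm l)" if "l \<in> Em" for l
        using valid that Em unfolding effs_def by blast
      have valid_fg: "valid_in W R (law_fm (Eff f a g))"
        using True model unfolding th_entails_iff_models by blast
      from l \<Theta>'_eq consider "l \<in> \<Theta>"
        | fi gi where "l = Eff (And fi (Neg t)) a gi" "Eff fi a gi \<in> Em"
        | fi gi where "l = Eff (And fi t) a (Or gi (term_fm T'))" "Eff fi a gi \<in> Em"
        | lt where "l = Eff (And t (lit_fm lt)) a (Or g (lit_fm lt))"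
        by blast
      then show "valid_in W R (law_fm l)"
      proof cases
        case 1
        then show ?thesis by (rule valid)
      next
        case 2
        then show ?thesis using valid_Em[OF 2(2)] unfolding valid_in_def by auto
      next
        case 3
        then show ?thesis using valid_Em[OF 3(2)] unfolding valid_in_def by auto
      next
        case 4
        have "sat R w f" if "sat R w t" for w
          using sat_tphi_imp[OF _ T assms(2)] that unfolding t_def .
        then show ?thesis using valid_fg unfolding 4 valid_in_def by auto
      qed
    qed
  qed
qed

lemma th_model_contract_stat_insert:
  assumes model: "th_model \<Theta> W R" and "w \<notin> W"
    and f: "is_bool f" "\<not> bsat w f" "\<forall>x\<in>W. bsat x f"
    and S': "\<forall>s\<in>S'. is_bool s" "insert w W \<subseteq> vals S'"
  shows "th_model ({l\<in>\<Theta>. \<exists>g a h. l = Eff g a h} \<union> Stat ` S'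
      \<union> {Exe (And fi f) a | fi a. Exe fi a \<in> \<Theta>} \<union> range (\<lambda>a. Eff (Neg f) a FBot)) (insert w W) R"
proof -
  have R: "R a \<subseteq> W \<times> W" for a using model unfolding th_model_def is_model_def by blast
  have valid: "sat R x (law_fm l)" if "l \<in> \<Theta>" "x \<in> W" for l x
    using model that unfolding th_model_def valid_in_def by blast
  have w_final: "(w, v) \<notin> R a" for v a using R \<open>w \<notin> W\<close> by blast
  have sat_f: "sat R x f \<longleftrightarrow> x \<noteq> w" if "x \<in> insert w W" for x
  proof -
    have "sat R x f = bsat x f" by (rule bsat_eq_sat[OF f(1), symmetric])
    then show ?thesis using that f(2,3) by auto
  qed
  have "sat R x (law_fm l)"
    if l: "l \<in> {l\<in>\<Theta>. \<exists>g a h. l = Eff g a h} \<union> Stat ` S'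
      \<union> {Exe (And fi f) a | fi a. Exe fi a \<in> \<Theta>} \<union> range (\<lambda>a. Eff (Neg f) a FBot)"
    and x: "x \<in> insert w W" for l x
  proof -
    from l consider g a h where "l = Eff g a h" "l \<in> \<Theta>"
      | s where "l = Stat s" "s \<in> S'"
      | fi a where "l = Exe (And fi f) a" "Exe fi a \<in> \<Theta>"
      | a where "l = Eff (Neg f) a FBot"
      by blast
    then show ?thesis
    proof cases
      case (1 g a h)
      show ?thesis
      proof (cases "x = w")
        case True
        then show ?thesis using 1(1) w_final by simp
      next
        case False
        then show ?thesis using valid[OF 1(2)] x by simp
      qed
    next
      case (2 s)
      have "bsat x s" using S' x 2(2) unfolding vals_def by blast
      then show ?thesis using 2 bsat_eq_sat[of s x R] S'(1) by simp
    next
      case (3 fi a)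
      show ?thesis
      proof (cases "x = w")
        case True
        then show ?thesis using 3(1) sat_f[OF x] by simp
      next
        case False
        then show ?thesis using 3(1) valid[OF 3(2)] x by simp
      qed
    next
      case (4 a)
      then show ?thesis using sat_f[OF x] w_final by auto
    qed
  qed
  moreover have "is_model (insert w W) R" using R unfolding is_model_def by blast
  ultimately show ?thesis unfolding th_model_def valid_in_def by (intro conjI ballI)
qed

lemma good_scontr_contract_adds_valuation:
  assumes "good_scontr sc" "finite S" "\<forall>s\<in>S. is_bool s" "is_bool f" "cpl_entails S f"
    and "S' \<in> sc S f"
  obtains w where "\<forall>s\<in>S'. is_bool s" "\<not> bsat w f" "vals S' = vals S \<union> {w}"
proof -
  have "\<forall>S'\<in>sc S f. (\<forall>s\<in>S'. is_bool s) \<and> (\<exists>w. \<not> bsat w f \<and> vals S' = vals S \<union> {w})"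
    using assms(1)[unfolded good_scontr_def, rule_format, of S f] assms(2-5) by blast
  then show ?thesis using assms(6) that by blast
qed

lemma modular_contract_stat:
  fixes \<Theta> :: "('p::finite, 'a) law set"
  assumes sc: "good_scontr sc" and \<Theta>: "action_theory \<Theta>" "modular \<Theta>"
    and f: "is_bool f" and \<Theta>': "\<Theta>' \<in> contract_stat sc \<Theta> f"
  shows "modular \<Theta>'"
proof (cases "cpl_entails (statics \<Theta>) f")
  case False
  with \<Theta>(2) \<Theta>' show ?thesis by (simp add: contract_stat_def)
next
  case True
  define S where "S = statics \<Theta>"
  obtain S' where S': "S' \<in> sc S f" and \<Theta>'_eq: "\<Theta>' = {l\<in>\<Theta>. \<exists>g a h. l = Eff g a h}
      \<union> Stat ` S' \<union> {Exe (And fi f) a | fi a. Exe fi a \<in> \<Theta>} \<union> range (\<lambda>a. Eff (Neg f) a FBot)"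
    using \<Theta>' True unfolding contract_stat_def S_def by (simp only: if_False not_True_eq_False) blast
  have wf: "\<forall>l\<in>\<Theta>. wf_law l" using \<Theta>(1) unfolding action_theory_def by blast
  have "S = Stat -` \<Theta>" unfolding S_def statics_def by auto
  then have "finite S" using \<Theta>(1) unfolding action_theory_def
    by (simp add: finite_vimageI inj_def)
  moreover have "\<forall>s\<in>S. is_bool s" using wf unfolding S_def statics_def by force
  moreover have "cpl_entails S f" using True unfolding S_def .
  ultimately obtain w where S'_bool: "\<forall>s\<in>S'. is_bool s"
    and w: "\<not> bsat w f" "vals S' = vals S \<union> {w}"
    by (rule good_scontr_contract_adds_valuation[OF sc _ _ f _ S'])
  have "statics \<Theta>' = S'" unfolding \<Theta>'_eq statics_def by auto
  have worlds: "(\<forall>x\<in>W. bsat x f) \<and> w \<notin> W \<and> W \<subseteq> vals S'" if "th_model \<Theta> W R" for W R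
  proof -
    have "W \<subseteq> vals S" using th_model_worlds_vals[OF that wf] unfolding S_def .
    moreover have "\<forall>x\<in>vals S. bsat x f" using True unfolding S_def vals_def cpl_entails_def by blast
    ultimately show ?thesis using w by auto
  qed
  have extend: "\<exists>W' R'. th_model \<Theta>' W' R' \<and> v \<in> W'"
    if "th_model \<Theta> W R" "v \<in> insert w W" for W R v
  proof -
    have "w \<notin> W" "\<forall>x\<in>W. bsat x f" "insert w W \<subseteq> vals S'" using worlds[OF that(1)] w(2) by auto
    then have "th_model \<Theta>' (insert w W) R"
      unfolding \<Theta>'_eq by (rule th_model_contract_stat_insert[OF that(1) _ f w(1) _ S'_bool])
    then show ?thesis using that(2) by blast
  qed
  have "th_model \<Theta> {} (\<lambda>_. {})" unfolding th_model_def is_model_def valid_in_def by simp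
  then have "\<exists>W R. th_model \<Theta>' W R \<and> w \<in> W" using extend by blast
  moreover have "\<exists>W R. th_model \<Theta>' W R \<and> v \<in> W" if "v \<in> vals S" for v
    using \<Theta>(2) that extend unfolding modular_iff_models_cover S_def by blast
  ultimately show ?thesis
    unfolding modular_iff_models_cover \<open>statics \<Theta>' = S'\<close> w(2) by blast
qed

theorem lemma2:
  fixes sc :: "('p::finite, 'a::finite) fm set \<Rightarrow> ('p, 'a) fm \<Rightarrow> ('p, 'a) fm set set"
    and \<Theta> \<Theta>' :: "('p, 'a) law set"
    and \<Phi> :: "('p, 'a) law"
  assumes "good_scontr sc"
    and "action_theory \<Theta>"
    and "wf_law \<Phi>"
    and "modular \<Theta>"
    and "\<Theta>' \<in> contract sc \<Theta> \<Phi>"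
  shows "modular \<Theta>'"
proof (cases \<Phi>)
  case (Stat f)
  then have "is_bool f" "\<Theta>' \<in> contract_stat sc \<Theta> f" using assms(3,5) by (simp_all add: contract_def)
  then show ?thesis by (rule modular_contract_stat[OF assms(1,2,4)])
next
  case (Eff f a g)
  then have "is_bool f" "\<Theta>' \<in> contract_eff \<Theta> f a g" using assms(3,5) by (simp_all add: contract_def)
  then show ?thesis by (rule modular_contract_eff[OF assms(4)])
next
  case (Exe f a)
  then have "\<Theta>' \<in> contract_exe \<Theta> f a" using assms(5) by (simp add: contract_def)
  then show ?thesis by (rule modular_contract_exe[OF assms(4)])
qed

end
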